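(* Let $0.1<\gamma\le 1$, let $r=k$ be an integer with $3\le k<0.01\log^{1/2}n$, and let $n$ be sufficiently large. Then every set of $\gamma n^k$ vertices of $\mathcal{H}(n,k,k)$ spans at least $$\frac{\gamma^{k+1}\,n^{2k}}{k!\cdot 2^{3k^2}\cdot 10\cdot 2^{3k}\cdot k\cdot\log n}$$ hyperedges.
   Context: Logarithms are to base 2. For integers $n,k,r\ge3$, $\mathcal{H}(n,k,r)$ is the $r$-uniform hypergraph with vertex set $[n]^k$ whose edges are all $r$-element subsets of $[n]^k$ lying on a common line in $\mathbb{R}^k$. A vertex set spans an edge if the edge is contained in it. *)

theory Defs
  imports Complex_Main
begin

definition grid :: "nat \<Rightarrow> nat \<Rightarrow> (nat \<Rightarrow> int) set" where
  "grid n k = {x. (\<forall>i<k. 1 \<le> x i \<and> x i \<le> int n) \<and> (\<forall>i\<ge>k. x i = 0)}"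

definition on_common_line :: "nat \<Rightarrow> (nat \<Rightarrow> int) set \<Rightarrow> bool" where
  "on_common_line k A \<longleftrightarrow>
     (\<exists>p d :: nat \<Rightarrow> real. (\<exists>i<k. d i \<noteq> 0) \<and>
        (\<forall>x\<in>A. \<exists>t::real. \<forall>i<k. real_of_int (x i) = p i + t * d i))"

definition H_edges :: "nat \<Rightarrow> nat \<Rightarrow> nat \<Rightarrow> (nat \<Rightarrow> int) set set" where
  "H_edges n k r = {e. e \<subseteq> grid n k \<and> card e = r \<and> on_common_line k e}"

definition spanned_edges :: "nat \<Rightarrow> nat \<Rightarrow> nat \<Rightarrow> (nat \<Rightarrow> int) set \<Rightarrow> nat" where
  "spanned_edges n k r S = card {e \<in> H_edges n k r. e \<subseteq> S}"

end

theory Submission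
  imports Defs "HOL-Analysis.Convex"
begin

text \<open>
  Fix a slope \<open>m\<close> and consider the integer directions \<open>d = (m, d_1, ..., d_(k-1))\<close>
  with \<open>0 \<le> d_i < m\<close>. Since the sum of \<open>1/t^2\<close> over \<open>t \<ge> 2\<close> is below \<open>3/4\<close>, at least a
  quarter of these \<open>m^(k-1)\<close> vectors are primitive. Translating each grid point along \<open>d\<close>
  until its first coordinate lies in \<open>{1..m}\<close> partitions \<open>S\<close> into collinear fibres indexed
  by a box of \<open>m (2n)^(k-1)\<close> points, and by convexity of \<open>x^k\<close> these fibres contain many
  \<open>k\<close>-subsets, each a spanned edge. Two points determine the primitive direction through
  them, so fibres belonging to different (direction, fibre) pairs share at most one point
  and all these edges are distinct. Summing over the slopes \<open>m \<le> \<gamma>n / (k 2^k)\<close> gives more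
  than the claimed number of edges once \<open>n \<ge> 2^(2k+5)\<close>, which the hypothesis
  \<open>k < 0.01 \<surd>(log n)\<close> guarantees.
\<close>

definition coord_box :: "nat \<Rightarrow> (nat \<Rightarrow> 'a set) \<Rightarrow> (nat \<Rightarrow> 'a::zero) set" where
  "coord_box k A = {x. (\<forall>i<k. x i \<in> A i) \<and> (\<forall>i\<ge>k. x i = 0)}"

lemma bij_betw_restrict_coord_box:
  "bij_betw (\<lambda>x. restrict x {..<k}) (coord_box k A) (\<Pi>\<^sub>E i\<in>{..<k}. A i)"
proof (rule bij_betw_byWitness[where f' = "\<lambda>e i. if i < k then e i else 0"])
  show "\<forall>x\<in>coord_box k A. (\<lambda>i. if i < k then restrict x {..<k} i else 0) = x"
    by (auto simp: coord_box_def fun_eq_iff)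
  show "\<forall>e\<in>\<Pi>\<^sub>E i\<in>{..<k}. A i. restrict (\<lambda>i. if i < k then e i else 0) {..<k} = e"
    by (auto simp: fun_eq_iff PiE_def extensional_def)
  show "(\<lambda>x. restrict x {..<k}) ` coord_box k A \<subseteq> (\<Pi>\<^sub>E i\<in>{..<k}. A i)"
    unfolding coord_box_def by (intro image_subsetI restrict_PiE_iff[THEN iffD2]) simp
  show "(\<lambda>e i. if i < k then e i else 0) ` (\<Pi>\<^sub>E i\<in>{..<k}. A i) \<subseteq> coord_box k A"
    by (rule image_subsetI) (simp add: coord_box_def PiE_iff)
qed

lemma card_coord_box: "card (coord_box k A) = (\<Prod>i<k. card (A i))"
  using bij_betw_same_card[OF bij_betw_restrict_coord_box] by (simp add: card_PiE)

lemma finite_coord_box: "(\<And>i. i < k \<Longrightarrow> finite (A i)) \<Longrightarrow> finite (coord_box k A)"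
  using bij_betw_finite[OF bij_betw_restrict_coord_box, of k A] finite_PiE[of "{..<k}" A] by simp

lemma card_coord_box_const_tail:
  assumes "0 < k" and "\<And>i. 0 < i \<Longrightarrow> card (A i) = c"
  shows "card (coord_box k A) = card (A 0) * c ^ (k - 1)"
proof -
  obtain j where "k = Suc j" using assms(1) by (cases k) auto
  then have "card (coord_box k A) = card (A 0) * (\<Prod>i<j. card (A (Suc i)))"
    by (simp only: card_coord_box prod.lessThan_Suc_shift)
  then show ?thesis using assms(2) \<open>k = Suc j\<close> by simp
qed

lemma grid_eq_coord_box: "grid n k = coord_box k (\<lambda>_. {1..int n})"
  by (auto simp: grid_def coord_box_def)

lemma finite_grid: "finite (grid n k)"
  by (simp add: grid_eq_coord_box finite_coord_box)

lemma power_mean_le_sum_power: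
  fixes t :: "'a \<Rightarrow> real"
  assumes "finite R" "R \<noteq> {}" "\<And>x. x \<in> R \<Longrightarrow> 0 \<le> t x"
  shows "real (card R) * ((\<Sum>x\<in>R. t x) / card R) ^ k \<le> (\<Sum>x\<in>R. t x ^ k)"
proof -
  have c: "real (card R) > 0" using assms by (simp add: card_gt_0_iff)
  have "convex_on {0..} (\<lambda>x::real. x ^ k)"
    by (cases "even k") (auto intro: convex_power_odd convex_on_subset[OF convex_power_even])
  from convex_on_sum[OF assms(1,2) this, where a = "\<lambda>_. 1 / card R" and y = t]
  have "(\<Sum>x\<in>R. t x / card R) ^ k \<le> (\<Sum>x\<in>R. t x ^ k / card R)"
    using assms c by auto
  then have "((\<Sum>x\<in>R. t x) / card R) ^ k \<le> (\<Sum>x\<in>R. t x ^ k) / card R"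
    by (simp only: sum_divide_distrib)
  then show ?thesis using c by (simp add: pos_le_divide_eq mult.commute)
qed

lemma power_le_choose:
  assumes "0 < k"
  shows "(max (real s - real k) 0 / real k) ^ k \<le> real (s choose k)"
proof (cases "k \<le> s")
  case True
  have "(max (real s - real k) 0 / real k) ^ k \<le> (real s / real k) ^ k"
    using assms by (intro power_mono divide_right_mono) auto
  also have "\<dots> \<le> real (s choose k)" using binomial_ge_n_over_k_pow_k[OF True] by simp
  finally show ?thesis .
next
  case False
  then show ?thesis using assms by (simp add: zero_power)
qed

lemma sum_choose_ge_power_sum:
  fixes s :: "'a \<Rightarrow> nat"
  assumes R: "finite R" "R \<noteq> {}" and k: "0 < k" and big: "2 * k * card R \<le> (\<Sum>x\<in>R. s x)"
  shows "real (\<Sum>x\<in>R. s x) ^ k / (2 ^ k * real k ^ k * real (card R) ^ (k - 1))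
    \<le> (\<Sum>x\<in>R. real (s x choose k))"
proof -
  define A where "A = real (\<Sum>x\<in>R. s x)"
  define c where "c = real (card R)"
  define t where "t x = max (real (s x) - real k) 0" for x
  have c0: "0 < c" using R by (simp add: c_def card_gt_0_iff)
  have "2 * real k * c \<le> A"
    unfolding A_def c_def using big by (metis of_nat_le_iff of_nat_mult of_nat_numeral)
  then have "A / 2 \<le> A - real k * c" by simp
  also have "\<dots> = (\<Sum>x\<in>R. real (s x) - real k)"
    by (simp add: A_def c_def sum_subtractf)
  also have "\<dots> \<le> (\<Sum>x\<in>R. t x)" by (rule sum_mono) (simp add: t_def)
  finally have half: "A / 2 / c \<le> (\<Sum>x\<in>R. t x) / c"
    using less_imp_le[OF c0] by (rule divide_right_mono)
  have "A ^ k / (2 ^ k * c ^ (k - 1)) = c * (A / 2 / c) ^ k"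
    using c0 k by (cases k) (simp_all add: power_divide field_simps)
  also have "\<dots> \<le> c * ((\<Sum>x\<in>R. t x) / c) ^ k"
    using half c0 by (intro mult_left_mono power_mono) (auto simp: A_def sum_nonneg)
  also have "\<dots> \<le> (\<Sum>x\<in>R. t x ^ k)"
    unfolding c_def by (rule power_mean_le_sum_power[OF R]) (simp add: t_def)
  finally have "A ^ k / (2 ^ k * c ^ (k - 1)) / real k ^ k \<le> (\<Sum>x\<in>R. t x ^ k) / real k ^ k"
    by (rule divide_right_mono) simp
  also have "\<dots> = (\<Sum>x\<in>R. (t x / real k) ^ k)"
    by (simp add: sum_divide_distrib power_divide)
  also have "\<dots> \<le> (\<Sum>x\<in>R. real (s x choose k))"
    unfolding t_def by (intro sum_mono power_le_choose k)
  finally show ?thesis by (simp add: A_def c_def field_simps)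
qed

lemma sum_inverse_squares_le: "2 \<le> n \<Longrightarrow> (\<Sum>t=2..n. 1 / real t ^ 2) \<le> 3 / 4 - 1 / real n"
proof (induction n rule: nat_induct_at_least)
  case (Suc n)
  have "1 / (real n + 1) ^ 2 \<le> 1 / (real n * (real n + 1))"
    by (rule divide_left_mono) (use Suc.hyps in \<open>auto simp: power2_eq_square\<close>)
  also have "\<dots> = 1 / real n - 1 / (real n + 1)"
    using Suc.hyps by (simp add: field_simps)
  finally have "1 / (real n + 1) ^ 2 \<le> 1 / real n - 1 / (real n + 1)" .
  then show ?case using Suc by (simp add: sum.cl_ivl_Suc add.commute)
qed simp

definition dirs :: "nat \<Rightarrow> nat \<Rightarrow> (nat \<Rightarrow> int) set" where
  "dirs k m = coord_box k (\<lambda>i. if i = 0 then {int m} else {0..<int m})"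

definition primitive :: "nat \<Rightarrow> (nat \<Rightarrow> int) \<Rightarrow> bool" where
  "primitive k d \<longleftrightarrow> (\<forall>t>1. \<not> (\<forall>i<k. t dvd d i))"

lemma dirs_first_coord: "d \<in> dirs k m \<Longrightarrow> 0 < k \<Longrightarrow> d 0 = int m"
  by (auto simp: dirs_def coord_box_def)

lemma finite_dirs: "finite (dirs k m)"
  unfolding dirs_def by (rule finite_coord_box) simp

lemma card_dirs: "0 < k \<Longrightarrow> card (dirs k m) = m ^ (k - 1)"
  unfolding dirs_def by (subst card_coord_box_const_tail[where c = m]) auto

lemma card_dirs_multiples:
  assumes k: "0 < k" and t: "0 < t"
  shows "real (card {d \<in> dirs k m. \<forall>i<k. int t dvd d i}) \<le> (real m / real t) ^ (k - 1)"
proof -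
  define B :: "nat \<Rightarrow> int set" where "B i = {a \<in> (if i = 0 then {int m} else {0..<int m}). int t dvd a}" for i
  have eq: "{d \<in> dirs k m. \<forall>i<k. int t dvd d i} = coord_box k B"
    by (auto simp: dirs_def coord_box_def B_def)
  have card_B: "card (coord_box k B) = card (B 0) * card (B 1) ^ (k - 1)"
    using k by (intro card_coord_box_const_tail) (auto simp: B_def)
  show ?thesis
  proof (cases "t dvd m")
    case True
    have "B 1 \<subseteq> (\<lambda>j. int t * j) ` {0..<int (m div t)}"
    proof
      fix a assume a: "a \<in> B 1"
      then obtain q where q: "a = int t * q" by (auto simp: B_def elim: dvdE)
      have "int m = int t * int (m div t)" using True by (metis dvd_mult_div_cancel of_nat_mult)
      then have "0 \<le> q" "q < int (m div t)"
        using a t by (auto simp: B_def q zero_le_mult_iff mult_less_cancel_left)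
      then show "a \<in> (\<lambda>j. int t * j) ` {0..<int (m div t)}" using q by auto
    qed
    then have "card (B 1) \<le> card ((\<lambda>j. int t * j) ` {0..<int (m div t)})"
      by (intro card_mono) auto
    also have "\<dots> \<le> m div t" using card_image_le[of "{0..<int (m div t)}"] by simp
    finally have "card (B 1) ^ (k - 1) \<le> (m div t) ^ (k - 1)" by (rule power_mono) simp
    moreover have "card (B 0) \<le> 1" by (simp add: B_def card_le_Suc0_iff_eq)
    ultimately have "card (coord_box k B) \<le> (m div t) ^ (k - 1)"
      unfolding card_B using mult_le_mono by (metis mult_1)
    then have "real (card (coord_box k B)) \<le> real (m div t) ^ (k - 1)"
      by (metis of_nat_le_iff of_nat_power)
    then show ?thesis using True by (simp add: eq real_of_nat_div)
  next
    case False
    then have "B 0 = {}" by (simp add: B_def)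
    then show ?thesis by (simp add: eq card_B)
  qed
qed

lemma nonprimitive_dirs_subset:
  assumes "0 < k" "1 \<le> m"
  shows "{d \<in> dirs k m. \<not> primitive k d} \<subseteq> (\<Union>t\<in>{2..m}. {d \<in> dirs k m. \<forall>i<k. int t dvd d i})"
proof
  fix d assume d: "d \<in> {d \<in> dirs k m. \<not> primitive k d}"
  then obtain t :: int where t: "1 < t" "\<forall>i<k. t dvd d i" by (auto simp: primitive_def)
  have "t dvd int m" using t(2) assms(1) dirs_first_coord[of d k m] d by auto
  then have "t \<le> int m" using assms(2) by (simp add: zdvd_imp_le)
  moreover have "int (nat t) = t" using t(1) by simp
  ultimately have "nat t \<in> {2..m}" "\<forall>i<k. int (nat t) dvd d i"
    using t by auto
  then show "d \<in> (\<Union>t\<in>{2..m}. {d \<in> dirs k m. \<forall>i<k. int t dvd d i})"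
    using d by blast
qed

lemma card_nonprimitive_dirs_le:
  assumes k: "3 \<le> k" and m: "1 \<le> m"
  shows "real (card {d \<in> dirs k m. \<not> primitive k d}) \<le> 3 / 4 * real m ^ (k - 1)"
proof -
  let ?M = "\<lambda>t. {d \<in> dirs k m. \<forall>i<k. int t dvd d i}"
  have fin_M: "finite (?M t)" for t using finite_dirs by simp
  have "card {d \<in> dirs k m. \<not> primitive k d} \<le> card (\<Union>t\<in>{2..m}. ?M t)"
    using k m by (intro card_mono finite_UN_I finite_atLeastAtMost fin_M nonprimitive_dirs_subset) auto
  also have "\<dots> \<le> (\<Sum>t=2..m. card (?M t))"
    by (rule card_UN_le) simp
  finally have "real (card {d \<in> dirs k m. \<not> primitive k d}) \<le> real (\<Sum>t=2..m. card (?M t))"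
    by (simp only: of_nat_le_iff)
  also have "\<dots> = (\<Sum>t=2..m. real (card (?M t)))"
    by (rule of_nat_sum)
  also have "\<dots> \<le> (\<Sum>t=2..m. real m ^ (k - 1) * (1 / real t ^ 2))"
  proof (rule sum_mono)
    fix t assume t: "t \<in> {2..m}"
    have "real (card (?M t)) \<le> (real m / real t) ^ (k - 1)"
      using k t by (intro card_dirs_multiples) auto
    also have "\<dots> = real m ^ (k - 1) * (1 / real t ^ (k - 1))" by (simp add: power_divide)
    also have "\<dots> \<le> real m ^ (k - 1) * (1 / real t ^ 2)"
      using t k by (intro mult_left_mono divide_left_mono power_increasing) auto
    finally show "real (card (?M t)) \<le> real m ^ (k - 1) * (1 / real t ^ 2)" .
  qed
  also have "\<dots> = real m ^ (k - 1) * (\<Sum>t=2..m. 1 / real t ^ 2)"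
    by (simp only: sum_distrib_left)
  also have "\<dots> \<le> real m ^ (k - 1) * (3 / 4)"
  proof (rule mult_left_mono)
    show "(\<Sum>t=2..m. 1 / real t ^ 2) \<le> 3 / 4"
    proof (cases "2 \<le> m")
      case True
      have "0 \<le> 1 / real m" by simp
      with sum_inverse_squares_le[OF True] show ?thesis by linarith
    qed simp
  qed simp
  finally show ?thesis by simp
qed

lemma card_primitive_dirs:
  assumes k: "3 \<le> k" and m: "1 \<le> m"
  shows "real m ^ (k - 1) / 4 \<le> real (card {d \<in> dirs k m. primitive k d})"
proof -
  let ?N = "{d \<in> dirs k m. \<not> primitive k d}"
  have "card {d \<in> dirs k m. primitive k d} = card (dirs k m) - card ?N"
    using finite_dirs by (subst card_Diff_subset[symmetric]) (auto intro: arg_cong[where f = card])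
  moreover have "card ?N \<le> card (dirs k m)" using finite_dirs by (intro card_mono) auto
  ultimately show ?thesis
    using card_nonprimitive_dirs_le[OF k m] card_dirs[of k m] k by (simp add: of_nat_diff)
qed

lemma primitive_unit_divisor:
  assumes "primitive k d" and "\<forall>i<k. c dvd d i" and "c \<noteq> 0"
  shows "\<bar>c\<bar> = 1"
proof (rule ccontr)
  assume "\<bar>c\<bar> \<noteq> 1"
  with assms(3) have "1 < \<bar>c\<bar>" by linarith
  moreover have "\<forall>i<k. \<bar>c\<bar> dvd d i" using assms(2) by simp
  ultimately show False using assms(1) by (auto simp: primitive_def)
qed

lemma primitive_parallel_eq:
  assumes d: "primitive k d" and d': "primitive k d'" and k: "0 < k"
    and pos: "0 < d 0" "0 < d' 0" and u: "u \<noteq> 0" and par: "\<forall>i<k. u * d i = v * d' i"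
  shows "\<forall>i<k. d i = d' i"
proof -
  define g where "g = gcd u v"
  have g: "g \<noteq> 0" using u by (simp add: g_def)
  then obtain u' v' where uv: "u = u' * g" "v = v' * g" and cop: "coprime u' v'"
    using gcd_coprime_exists unfolding g_def by blast
  have par': "u' * d i = v' * d' i" if "i < k" for i
  proof -
    have "g * (u' * d i) = g * (v' * d' i)"
      using par that uv by (simp add: ac_simps)
    then show ?thesis using g by simp
  qed
  have eq0: "u' * d 0 = v' * d' 0" using par' k by simp
  have nz: "u' \<noteq> 0" "v' \<noteq> 0" using uv(1) u eq0 pos by auto
  have "v' dvd d i" if "i < k" for i
  proof -
    have "v' dvd u' * d i" unfolding par'[OF that] by simp
    then show ?thesis using cop by (simp add: coprime_commute coprime_dvd_mult_right_iff)
  qed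
  then have v': "\<bar>v'\<bar> = 1" using primitive_unit_divisor[OF d] nz by blast
  have "u' dvd d' i" if "i < k" for i
  proof -
    have "u' dvd v' * d' i" unfolding par'[OF that, symmetric] by simp
    then show ?thesis using cop by (simp add: coprime_dvd_mult_right_iff)
  qed
  then have u': "\<bar>u'\<bar> = 1" using primitive_unit_divisor[OF d'] nz by blast
  from eq0 u' v' pos have "u' = v'"
    by (auto simp: abs_if split: if_splits)
  then show ?thesis using par' nz by simp
qed

text \<open>
  \<open>reduce d y\<close> translates \<open>y\<close> by a multiple of \<open>d\<close> so that its first coordinate lands in
  \<open>{1..d 0}\<close>; points with the same image lie on a common line of direction \<open>d\<close>.
\<close>
definition reduce :: "(nat \<Rightarrow> int) \<Rightarrow> (nat \<Rightarrow> int) \<Rightarrow> nat \<Rightarrow> int" where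
  "reduce d y = (\<lambda>i. y i - (y 0 - 1) div d 0 * d i)"

definition reduced_box :: "nat \<Rightarrow> nat \<Rightarrow> nat \<Rightarrow> (nat \<Rightarrow> int) set" where
  "reduced_box k n m = coord_box k (\<lambda>i. if i = 0 then {1..int m} else {1 - int n..int n})"

lemma finite_reduced_box: "finite (reduced_box k n m)"
  unfolding reduced_box_def by (rule finite_coord_box) simp

lemma card_reduced_box: "0 < k \<Longrightarrow> card (reduced_box k n m) = m * (2 * n) ^ (k - 1)"
  unfolding reduced_box_def
  by (subst card_coord_box_const_tail[where c = "2 * n"]) (auto simp: nat_int_add)

lemma reduce_in_reduced_box:
  assumes y: "y \<in> grid n k" and d: "d \<in> dirs k m" and m: "1 \<le> m" and k: "0 < k"
  shows "reduce d y \<in> reduced_box k n m"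
proof -
  define j where "j = (y 0 - 1) div int m"
  have d0: "d 0 = int m" using dirs_first_coord[OF d k] .
  have y0: "1 \<le> y 0" "y 0 \<le> int n" using y k by (auto simp: grid_def)
  have "j * int m + (y 0 - 1) mod int m = y 0 - 1" unfolding j_def by (rule div_mult_mod_eq)
  moreover have "0 \<le> (y 0 - 1) mod int m" "(y 0 - 1) mod int m < int m" using m by simp_all
  ultimately have j: "j * int m \<le> y 0 - 1" "y 0 - 1 < j * int m + int m" by linarith+
  have j0: "0 \<le> j" unfolding j_def using y0 m by (simp add: pos_imp_zdiv_nonneg_iff)
  have "reduce d y i \<in> {1 - int n..int n}" if i: "0 < i" "i < k" for i
  proof -
    have "0 \<le> d i" "d i < int m" using d i by (auto simp: dirs_def coord_box_def)
    then have "0 \<le> j * d i" "j * d i \<le> j * int m" using j0 by (simp_all add: mult_left_mono)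
    moreover have "1 \<le> y i" "y i \<le> int n" using y i by (auto simp: grid_def)
    ultimately show ?thesis using j y0 by (simp add: reduce_def d0 j_def)
  qed
  moreover have "reduce d y 0 \<in> {1..int m}" using j by (simp add: reduce_def d0 j_def)
  moreover have "reduce d y i = 0" if "k \<le> i" for i
    using that y d by (simp add: reduce_def grid_def dirs_def coord_box_def)
  ultimately show ?thesis by (auto simp: reduced_box_def coord_box_def)
qed

lemma reduce_eq_add: "reduce d y = x \<Longrightarrow> y i = x i + (y 0 - 1) div d 0 * d i"
  by (auto simp: reduce_def)

lemma on_common_line_subset: "on_common_line k A \<Longrightarrow> B \<subseteq> A \<Longrightarrow> on_common_line k B"
  unfolding on_common_line_def by blast

lemma on_common_line_reduce_fibre:
  assumes "0 < k" and "d 0 \<noteq> 0"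
  shows "on_common_line k {y. reduce d y = x}"
proof -
  have "\<exists>t. \<forall>i<k. real_of_int (y i) = real_of_int (x i) + t * real_of_int (d i)"
    if "reduce d y = x" for y
    using reduce_eq_add[OF that] by (metis of_int_add of_int_mult)
  then have "\<forall>y\<in>{y. reduce d y = x}. \<exists>t. \<forall>i<k. real_of_int (y i) = real_of_int (x i) + t * real_of_int (d i)"
    by blast
  moreover have "\<exists>i<k. real_of_int (d i) \<noteq> 0" using assms by auto
  ultimately show ?thesis unfolding on_common_line_def
    by (intro exI[of _ "\<lambda>i. real_of_int (x i)"] exI[of _ "\<lambda>i. real_of_int (d i)"] conjI)
qed

lemma two_points_determine_reduce_fibre:
  assumes d: "d \<in> dirs k m" "primitive k d" and d': "d' \<in> dirs k m'" "primitive k d'"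
    and m: "1 \<le> m" "1 \<le> m'" and k: "0 < k"
    and y: "reduce d y = x" "reduce d' y = x'" and z: "reduce d z = x" "reduce d' z = x'"
    and "y \<noteq> z"
  shows "d = d' \<and> x = x'"
proof -
  define u where "u = (y 0 - 1) div d 0 - (z 0 - 1) div d 0"
  define v where "v = (y 0 - 1) div d' 0 - (z 0 - 1) div d' 0"
  have u_diff: "y i - z i = u * d i" for i
    using reduce_eq_add[OF y(1), of i] reduce_eq_add[OF z(1), of i] by (simp add: u_def algebra_simps)
  have v_diff: "y i - z i = v * d' i" for i
    using reduce_eq_add[OF y(2), of i] reduce_eq_add[OF z(2), of i] by (simp add: v_def algebra_simps)
  have "u \<noteq> 0"
  proof
    assume "u = 0"
    then have "y i = z i" for i using u_diff[of i] by simp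
    with \<open>y \<noteq> z\<close> show False by auto
  qed
  moreover have "0 < d 0" "0 < d' 0"
    using dirs_first_coord[OF d(1) k] dirs_first_coord[OF d'(1) k] m by simp_all
  moreover have "\<forall>i<k. u * d i = v * d' i" using u_diff v_diff by simp
  ultimately have "\<forall>i<k. d i = d' i" using primitive_parallel_eq[OF d(2) d'(2) k] by blast
  moreover have "d i = d' i" if "k \<le> i" for i
    using that d(1) d'(1) by (simp add: dirs_def coord_box_def)
  ultimately have "d = d'" by (metis not_le ext)
  with y z show ?thesis by simp
qed

lemma reduce_fibres_meet_at_most_once:
  assumes S: "S \<subseteq> grid n k" and d: "d \<in> dirs k m" "primitive k d" and d': "d' \<in> dirs k m'" "primitive k d'"
    and m: "1 \<le> m" "1 \<le> m'" and k: "0 < k" and ne: "(d, x) \<noteq> (d', x')"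
  shows "card ({y \<in> S. reduce d y = x} \<inter> {y \<in> S. reduce d' y = x'}) \<le> 1"
proof -
  define A where "A = {y \<in> S. reduce d y = x} \<inter> {y \<in> S. reduce d' y = x'}"
  have "A \<subseteq> S" by (auto simp: A_def)
  then have "finite A" using finite_subset[OF S finite_grid] by (rule finite_subset)
  moreover have "y = z" if "y \<in> A" "z \<in> A" for y z
  proof (rule ccontr)
    assume "y \<noteq> z"
    moreover have "reduce d y = x" "reduce d' y = x'" "reduce d z = x" "reduce d' z = x'"
      using that by (simp_all add: A_def)
    ultimately have "d = d' \<and> x = x'"
      using two_points_determine_reduce_fibre[OF d d' m k] by blast
    with ne show False by simp
  qed
  ultimately have "card A \<le> Suc 0" using card_le_Suc0_iff_eq by blast
  then show ?thesis by (simp add: A_def)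
qed

lemma spanned_edges_ge_sum_choose:
  assumes I: "finite I" and r: "2 \<le> r" and S: "S \<subseteq> grid n k"
    and FS: "\<And>i. i \<in> I \<Longrightarrow> F i \<subseteq> S" and line: "\<And>i. i \<in> I \<Longrightarrow> on_common_line k (F i)"
    and meet: "\<And>i j. i \<in> I \<Longrightarrow> j \<in> I \<Longrightarrow> i \<noteq> j \<Longrightarrow> card (F i \<inter> F j) \<le> 1"
  shows "(\<Sum>i\<in>I. card (F i) choose r) \<le> spanned_edges n k r S"
proof -
  define E where "E i = {e. e \<subseteq> F i \<and> card e = r}" for i
  have finS: "finite S" using S finite_grid by (rule finite_subset)
  have fin: "finite (F i)" if "i \<in> I" for i using FS[OF that] finS by (rule finite_subset)
  have "(\<Sum>i\<in>I. card (F i) choose r) = (\<Sum>i\<in>I. card (E i))"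
    unfolding E_def using fin by (intro sum.cong refl n_subsets[symmetric])
  also have "\<dots> = card (\<Union>i\<in>I. E i)"
  proof (rule card_UN_disjoint[OF I, symmetric])
    show "\<forall>i\<in>I. finite (E i)" using fin by (simp add: E_def)
    show "\<forall>i\<in>I. \<forall>j\<in>I. i \<noteq> j \<longrightarrow> E i \<inter> E j = {}"
    proof (intro ballI impI)
      fix i j assume ij: "i \<in> I" "j \<in> I" "i \<noteq> j"
      show "E i \<inter> E j = {}"
      proof (rule ccontr)
        assume "E i \<inter> E j \<noteq> {}"
        then obtain e where "e \<subseteq> F i \<inter> F j" "card e = r" by (auto simp: E_def)
        moreover have "finite (F i \<inter> F j)" using fin ij by blast
        ultimately have "r \<le> card (F i \<inter> F j)" using card_mono by metis
        with meet[OF ij] r show False by simp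
      qed
    qed
  qed
  also have "\<dots> \<le> spanned_edges n k r S"
    unfolding spanned_edges_def
  proof (rule card_mono)
    have "{e \<in> H_edges n k r. e \<subseteq> S} \<subseteq> Pow S" by blast
    moreover have "finite (Pow S)" using finS by simp
    ultimately show "finite {e \<in> H_edges n k r. e \<subseteq> S}" by (rule finite_subset)
    show "(\<Union>i\<in>I. E i) \<subseteq> {e \<in> H_edges n k r. e \<subseteq> S}"
    proof
      fix e assume "e \<in> (\<Union>i\<in>I. E i)"
      then obtain i where i: "i \<in> I" "e \<subseteq> F i" "card e = r" by (auto simp: E_def)
      then have "e \<subseteq> S" using FS by blast
      moreover have "on_common_line k e" using line[OF i(1)] i(2) by (rule on_common_line_subset)
      ultimately show "e \<in> {e \<in> H_edges n k r. e \<subseteq> S}"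
        using S i(3) by (auto simp: H_edges_def)
    qed
  qed
  finally show ?thesis .
qed

lemma sum_card_reduce_fibres:
  assumes S: "S \<subseteq> grid n k" and d: "d \<in> dirs k m" and m: "1 \<le> m" and k: "0 < k"
  shows "(\<Sum>x\<in>reduced_box k n m. card {y \<in> S. reduce d y = x}) = card S"
proof -
  have "finite S" using S finite_grid by (rule finite_subset)
  moreover have "reduce d ` S \<subseteq> reduced_box k n m"
    using S reduce_in_reduced_box[OF _ d m k] by blast
  ultimately show ?thesis
    using sum.group[of S "reduced_box k n m" "reduce d" "\<lambda>_. 1::nat"] finite_reduced_box by simp
qed

lemma sum_choose_reduce_fibres_ge:
  assumes S: "S \<subseteq> grid n k" and d: "d \<in> dirs k m" and m: "1 \<le> m" and k: "0 < k" and n: "1 \<le> n"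
    and big: "2 * k * (m * (2 * n) ^ (k - 1)) \<le> card S"
  shows "real (card S) ^ k / (2 ^ k * real k ^ k * (2 * real n) ^ ((k - 1) * (k - 1))) / real m ^ (k - 1)
    \<le> (\<Sum>x\<in>reduced_box k n m. real (card {y \<in> S. reduce d y = x} choose k))"
proof -
  have "(\<lambda>i. if i < k then 1 else 0) \<in> reduced_box k n m"
    using m n by (auto simp: reduced_box_def coord_box_def)
  then have ne: "reduced_box k n m \<noteq> {}" by blast
  have sums: "(\<Sum>x\<in>reduced_box k n m. card {y \<in> S. reduce d y = x}) = card S"
    by (rule sum_card_reduce_fibres[OF S d m k])
  have "real (card S) ^ k / (2 ^ k * real k ^ k * real (m * (2 * n) ^ (k - 1)) ^ (k - 1))
    \<le> (\<Sum>x\<in>reduced_box k n m. real (card {y \<in> S. reduce d y = x} choose k))"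
    using sum_choose_ge_power_sum[OF finite_reduced_box ne k, of "\<lambda>x. card {y \<in> S. reduce d y = x}"]
    using big by (simp only: sums card_reduced_box[OF k])
  moreover have "real (m * (2 * n) ^ (k - 1)) ^ (k - 1)
      = real m ^ (k - 1) * (2 * real n) ^ ((k - 1) * (k - 1))"
    by (simp add: power_mult_distrib power_mult)
  ultimately show ?thesis by (simp add: divide_divide_eq_left ac_simps)
qed

lemma sum_choose_primitive_fibres_ge:
  assumes S: "S \<subseteq> grid n k" and k: "3 \<le> k" and m: "1 \<le> m" and n: "1 \<le> n"
    and big: "2 * k * (m * (2 * n) ^ (k - 1)) \<le> card S"
  shows "real (card S) ^ k / (2 ^ k * real k ^ k * (2 * real n) ^ ((k - 1) * (k - 1))) / 4
    \<le> (\<Sum>d\<in>{d \<in> dirs k m. primitive k d}.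
          \<Sum>x\<in>reduced_box k n m. real (card {y \<in> S. reduce d y = x} choose k))"
proof -
  define P where "P = real (card S) ^ k / (2 ^ k * real k ^ k * (2 * real n) ^ ((k - 1) * (k - 1)))"
  define D where "D = {d \<in> dirs k m. primitive k d}"
  have "real m ^ (k - 1) / 4 * (P / real m ^ (k - 1)) \<le> real (card D) * (P / real m ^ (k - 1))"
    using card_primitive_dirs[OF k m] by (intro mult_right_mono) (auto simp: D_def P_def)
  also have "\<dots> = (\<Sum>d\<in>D. P / real m ^ (k - 1))" by simp
  also have "\<dots> \<le> (\<Sum>d\<in>D. \<Sum>x\<in>reduced_box k n m. real (card {y \<in> S. reduce d y = x} choose k))"
    using sum_choose_reduce_fibres_ge[OF S _ m _ n big] k
    by (intro sum_mono) (auto simp: P_def D_def)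
  finally show ?thesis using m by (simp add: P_def D_def)
qed

lemma spanned_edges_ge_directions:
  assumes S: "S \<subseteq> grid n k" and k: "3 \<le> k" and n: "1 \<le> n"
    and big: "2 * k * (M * (2 * n) ^ (k - 1)) \<le> card S"
  shows "real M * (real (card S) ^ k / (2 ^ k * real k ^ k * (2 * real n) ^ ((k - 1) * (k - 1)))) / 4
    \<le> real (spanned_edges n k k S)"
proof -
  define P where "P = real (card S) ^ k / (2 ^ k * real k ^ k * (2 * real n) ^ ((k - 1) * (k - 1)))"
  define D where "D m = {d \<in> dirs k m. primitive k d}" for m
  define I where "I = (SIGMA m:{1..M}. SIGMA d:D m. reduced_box k n m)"
  define F where "F p = {y \<in> S. reduce (fst (snd p)) y = snd (snd p)}"
    for p :: "nat \<times> (nat \<Rightarrow> int) \<times> (nat \<Rightarrow> int)"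
  have k0: "0 < k" using k by simp
  have finD: "finite (D m)" for m using finite_dirs[of k m] by (simp add: D_def)
  have "(\<Sum>p\<in>I. card (F p) choose k) \<le> spanned_edges n k k S"
  proof (rule spanned_edges_ge_sum_choose[OF _ _ S])
    show "finite I" unfolding I_def using finD finite_reduced_box by (intro finite_SigmaI) auto
    show "2 \<le> k" using k by simp
    show "F p \<subseteq> S" for p by (auto simp: F_def)
    show "on_common_line k (F p)" if "p \<in> I" for p
    proof -
      obtain m d x where p: "p = (m, d, x)" "m \<in> {1..M}" "d \<in> dirs k m"
        using \<open>p \<in> I\<close> by (auto simp: I_def D_def)
      then have "d 0 \<noteq> 0" using dirs_first_coord[OF p(3) k0] by simp
      then have "on_common_line k {y. reduce d y = x}" by (rule on_common_line_reduce_fibre[OF k0])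
      then show ?thesis by (rule on_common_line_subset) (auto simp: F_def p)
    qed
    show "card (F p \<inter> F q) \<le> 1" if "p \<in> I" "q \<in> I" "p \<noteq> q" for p q
    proof -
      obtain m d x where p: "p = (m, d, x)" "1 \<le> m" "d \<in> dirs k m" "primitive k d"
        using \<open>p \<in> I\<close> by (auto simp: I_def D_def)
      obtain m' d' x' where q: "q = (m', d', x')" "1 \<le> m'" "d' \<in> dirs k m'" "primitive k d'"
        using \<open>q \<in> I\<close> by (auto simp: I_def D_def)
      have "(d, x) \<noteq> (d', x')"
        using \<open>p \<noteq> q\<close> dirs_first_coord[OF p(3) k0] dirs_first_coord[OF q(3) k0] p(1) q(1) by auto
      then show ?thesis
        using reduce_fibres_meet_at_most_once[OF S p(3,4) q(3,4) p(2) q(2) k0] by (simp add: F_def p q)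
    qed
  qed
  then have "real (\<Sum>p\<in>I. card (F p) choose k) \<le> real (spanned_edges n k k S)"
    by (simp only: of_nat_le_iff)
  moreover have "real (\<Sum>p\<in>I. card (F p) choose k)
      = (\<Sum>m=1..M. \<Sum>d\<in>D m. \<Sum>x\<in>reduced_box k n m. real (card {y \<in> S. reduce d y = x} choose k))"
    unfolding I_def F_def using finD finite_reduced_box by (simp add: sum.Sigma split_def)
  moreover have "(\<Sum>m=1..M. P / 4)
      \<le> (\<Sum>m=1..M. \<Sum>d\<in>D m. \<Sum>x\<in>reduced_box k n m. real (card {y \<in> S. reduce d y = x} choose k))"
  proof (rule sum_mono)
    fix m assume m: "m \<in> {1..M}"
    then have "2 * k * (m * (2 * n) ^ (k - 1)) \<le> card S"
      using big by (meson atLeastAtMost_iff le_trans mult_le_mono1 mult_le_mono2)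
    with m show "P / 4 \<le> (\<Sum>d\<in>D m. \<Sum>x\<in>reduced_box k n m. real (card {y \<in> S. reduce d y = x} choose k))"
      using sum_choose_primitive_fibres_ge[OF S k _ n] by (simp add: P_def D_def)
  qed
  moreover have "(\<Sum>m=1..M. P / 4) = real M * P / 4" by simp
  ultimately show ?thesis unfolding P_def by linarith
qed

lemma density_bound_eq:
  fixes \<gamma> x :: real
  assumes "0 < k" and "0 < x"
  shows "\<gamma> * x / (real k * 2 ^ k) / 2 * ((\<gamma> * x ^ k) ^ k
      / (2 ^ k * real k ^ k * (2 * x) ^ ((k - 1) * (k - 1)))) / 4
    = \<gamma> ^ (k + 1) * x ^ (2 * k) / (real k ^ (k + 1) * 2 ^ (k * k + 4))"
proof -
  obtain j where kj: "k = Suc j" using assms(1) by (cases k) auto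
  have "Suc (k * k) = 2 * k + j * j" using kj by simp
  then have x_pow: "x * x ^ (k * k) = x ^ (2 * k) * x ^ (j * j)"
    by (metis power_Suc power_add)
  have "k * k + 4 = k + 1 + k + j * j + 2" using kj by simp
  then have "(2::real) ^ (k * k + 4) = 2 ^ (k + 1 + k + j * j + 2)" by (simp only:)
  also have "\<dots> = 2 ^ k * 2 * 2 ^ k * 2 ^ (j * j) * 4" by (simp only: power_add) simp
  finally have two_pow: "(2::real) ^ (k * k + 4) = 2 ^ k * 2 * 2 ^ k * 2 ^ (j * j) * 4" .
  have "(k - 1) * (k - 1) = j * j" using kj by simp
  then have "\<gamma> * x / (real k * 2 ^ k) / 2 * ((\<gamma> * x ^ k) ^ k
      / (2 ^ k * real k ^ k * (2 * x) ^ ((k - 1) * (k - 1)))) / 4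
    = (\<gamma> * \<gamma> ^ k) * (x * x ^ (k * k))
      / (real k * real k ^ k * (2 ^ k * 2 * 2 ^ k * 2 ^ (j * j) * 4) * x ^ (j * j))"
    by (simp add: power_mult_distrib power_mult field_simps)
  also have "\<dots> = \<gamma> ^ (k + 1) * x ^ (2 * k) / (real k ^ (k + 1) * 2 ^ (k * k + 4))"
    using assms(2) unfolding x_pow two_pow[symmetric] by simp
  finally show ?thesis .
qed

lemma spanned_edges_ge_density:
  fixes \<gamma> :: real
  assumes S: "S \<subseteq> grid n k" and k: "3 \<le> k" and \<gamma>: "0 < \<gamma>"
    and cS: "real (card S) = \<gamma> * real n ^ k" and large: "real k * 2 ^ k \<le> \<gamma> * real n"
  shows "\<gamma> ^ (k + 1) * real n ^ (2 * k) / (real k ^ (k + 1) * 2 ^ (k * k + 4))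
    \<le> real (spanned_edges n k k S)"
proof -
  obtain j where kj: "k = Suc j" using k by (cases k) auto
  have kpos: "0 < real k" using k by simp
  then have "0 < \<gamma> * real n" using large by (smt (verit) mult_pos_pos zero_less_power)
  then have n: "1 \<le> n" using \<gamma> by (simp add: zero_less_mult_iff)
  define X where "X = \<gamma> * real n / (real k * 2 ^ k)"
  \<comment> \<open>Count the lines of all slopes \<open>m \<le> X\<close>: beyond \<open>X\<close> the fibres become too sparse.\<close>
  define M where "M = nat \<lfloor>X\<rfloor>"
  have X1: "1 \<le> X" using large kpos by (simp add: X_def)
  have "real M = real_of_int \<lfloor>X\<rfloor>" "1 \<le> \<lfloor>X\<rfloor>" using X1 by (simp_all add: M_def)
  then have MX: "X / 2 \<le> real M" "real M \<le> X" using floor_correct[of X] by linarith+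
  have "real (2 * k * (M * (2 * n) ^ (k - 1))) \<le> 2 * real k * (X * (2 * real n) ^ (k - 1))"
    using MX n by (simp add: mult_left_mono mult_right_mono)
  also have "\<dots> = real k * X * (2 * (2 * real n) ^ (k - 1))" by (simp only: ac_simps)
  also have "2 * (2 * real n) ^ (k - 1) = 2 ^ k * real n ^ (k - 1)"
    by (simp add: kj power_mult_distrib)
  also have "real k * X * (2 ^ k * real n ^ (k - 1)) = \<gamma> * (real n * real n ^ (k - 1))"
    using kpos by (simp add: X_def)
  also have "real n * real n ^ (k - 1) = real n ^ k" by (simp add: kj)
  finally have big: "2 * k * (M * (2 * n) ^ (k - 1)) \<le> card S" using cS by (metis of_nat_le_iff)
  define P where "P = real (card S) ^ k / (2 ^ k * real k ^ k * (2 * real n) ^ ((k - 1) * (k - 1)))"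
  have "\<gamma> ^ (k + 1) * real n ^ (2 * k) / (real k ^ (k + 1) * 2 ^ (k * k + 4)) = X / 2 * P / 4"
    unfolding X_def P_def cS using n k by (intro density_bound_eq[symmetric]) simp_all
  also have "\<dots> \<le> real M * P / 4"
    using MX \<gamma> by (intro divide_right_mono mult_right_mono) (auto simp: P_def cS)
  also have "\<dots> \<le> real (spanned_edges n k k S)"
    using spanned_edges_ge_directions[OF S k n big] by (simp add: P_def)
  finally show ?thesis .
qed

lemma le_log_of_lt_sqrt_log:
  fixes L :: real
  assumes k: "3 \<le> k" and kL: "real k < 0.01 * sqrt L"
  shows "real (2 * k + 5) \<le> L"
proof -
  have k100: "100 * real k < sqrt L" using kL by simp
  then have "0 < L" by (smt (verit) of_nat_0_le_iff real_sqrt_gt_0_iff)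
  have "(100 * real k) ^ 2 < sqrt L ^ 2"
    using k100 by (intro power_strict_mono) auto
  also have "\<dots> = L" using \<open>0 < L\<close> by simp
  finally have "10000 * (real k * real k) < L" by (simp add: power2_eq_square)
  moreover have "k \<le> k * k" by simp
  then have "2 * k + 5 \<le> 10000 * (k * k)" using k by linarith
  then have "real (2 * k + 5) \<le> 10000 * (real k * real k)"
    by (metis of_nat_le_iff of_nat_mult of_nat_numeral)
  ultimately show ?thesis by linarith
qed

lemma density_denominator_le:
  fixes L :: real
  assumes k: "2 \<le> k" and L: "1 \<le> L"
  shows "real k ^ (k + 1) * 2 ^ (k * k + 4) \<le> fact k * 2 ^ (3 * k\<^sup>2) * 10 * 2 ^ (3 * k) * real k * L"
proof -
  have "real k ^ k \<le> (2 ^ k) ^ k"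
    using of_nat_less_two_power[of k] by (intro power_mono) (simp_all add: less_imp_le)
  then have "real k * (real k ^ k * 2 ^ (k * k + 4)) \<le> real k * ((2 ^ k) ^ k * 2 ^ (k * k + 4))"
    by (intro mult_left_mono mult_right_mono) simp_all
  then have "real k ^ (k + 1) * 2 ^ (k * k + 4) \<le> real k * ((2 ^ k) ^ k * 2 ^ (k * k + 4))"
    by (simp add: ac_simps)
  also have "\<dots> = real k * 2 ^ (k * k + (k * k + 4))"
    by (simp only: power_mult[symmetric] power_add[symmetric])
  also have "\<dots> \<le> real k * 2 ^ (3 * k\<^sup>2)"
  proof -
    have "4 \<le> k * k" using mult_le_mono[OF k k] by simp
    then have "k * k + (k * k + 4) \<le> 3 * k\<^sup>2" by (simp add: power2_eq_square)
    then show ?thesis by (intro mult_left_mono power_increasing) simp_all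
  qed
  also have "\<dots> \<le> real k * 2 ^ (3 * k\<^sup>2) * (fact k * 10 * 2 ^ (3 * k) * L)"
  proof -
    have "1 * 1 * 1 * 1 \<le> fact k * (10::real) * 2 ^ (3 * k) * L"
      using L by (intro mult_mono) auto
    then show ?thesis
      using mult_left_mono[of 1 "fact k * 10 * 2 ^ (3 * k) * L" "real k * 2 ^ (3 * k\<^sup>2)"] by simp
  qed
  finally show ?thesis by (simp add: ac_simps)
qed

lemma large_side_of_lt_sqrt_log:
  fixes \<gamma> :: real
  assumes n: "1 \<le> n" and k: "3 \<le> k" and kL: "real k < 0.01 * sqrt (log 2 (real n))"
    and \<gamma>: "0.1 < \<gamma>"
  shows "real k * 2 ^ k \<le> \<gamma> * real n"
proof -
  have L: "real (2 * k + 5) \<le> log 2 (real n)" using le_log_of_lt_sqrt_log[OF k kL] .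
  have "32 * (2 ^ k * 2 ^ k) = (2::real) ^ (2 * k + 5)" by (simp only: mult_2 power_add) simp
  also have "\<dots> = 2 powr real (2 * k + 5)" by (rule powr_realpow[symmetric]) simp
  also have "\<dots> \<le> real n" using L n by (smt (verit) le_log_iff of_nat_0_less_iff less_le_trans zero_less_one)
  finally have n_large: "32 * (2 ^ k * 2 ^ k) \<le> real n" .
  have \<gamma>n: "0.1 * real n \<le> \<gamma> * real n" using \<gamma> by (intro mult_right_mono) simp_all
  have "real k * 2 ^ k \<le> 2 ^ k * 2 ^ k"
    using of_nat_less_two_power[of k] by (simp add: less_imp_le mult_right_mono)
  also have "\<dots> \<le> \<gamma> * real n" using n_large \<gamma>n by linarith
  finally show ?thesis .
qed

theorem lemma4p4:
  shows "\<exists>N::nat. \<forall>n\<ge>N. \<forall>k::nat. \<forall>\<gamma>::real. \<forall>S.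
     3 \<le> k \<longrightarrow> real k < 0.01 * sqrt (log 2 (real n)) \<longrightarrow>
     0.1 < \<gamma> \<longrightarrow> \<gamma> \<le> 1 \<longrightarrow>
     S \<subseteq> grid n k \<longrightarrow> real (card S) = \<gamma> * real n ^ k \<longrightarrow>
     real (spanned_edges n k k S) \<ge>
       \<gamma> ^ (k + 1) * real n ^ (2 * k) /
       (fact k * 2 ^ (3 * k\<^sup>2) * 10 * 2 ^ (3 * k) * real k * log 2 (real n))"
proof (intro exI[of _ 1] allI impI)
  fix n k :: nat and \<gamma> :: real and S
  assume n: "1 \<le> n" and k: "3 \<le> k" and kL: "real k < 0.01 * sqrt (log 2 (real n))"
    and \<gamma>: "0.1 < \<gamma>" and S: "S \<subseteq> grid n k" and cS: "real (card S) = \<gamma> * real n ^ k"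
  have L: "real (2 * k + 5) \<le> log 2 (real n)" using le_log_of_lt_sqrt_log[OF k kL] .
  have large: "real k * 2 ^ k \<le> \<gamma> * real n" using large_side_of_lt_sqrt_log[OF n k kL \<gamma>] .
  have "\<gamma> ^ (k + 1) * real n ^ (2 * k) /
      (fact k * 2 ^ (3 * k\<^sup>2) * 10 * 2 ^ (3 * k) * real k * log 2 (real n))
    \<le> \<gamma> ^ (k + 1) * real n ^ (2 * k) / (real k ^ (k + 1) * 2 ^ (k * k + 4))"
    using density_denominator_le[of k "log 2 (real n)"] k L \<gamma>
    by (intro divide_left_mono mult_pos_pos) auto
  also have "\<dots> \<le> real (spanned_edges n k k S)"
    using \<gamma> by (intro spanned_edges_ge_density[OF S k _ cS large]) simp
  finally show "\<gamma> ^ (k + 1) * real n ^ (2 * k) /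
      (fact k * 2 ^ (3 * k\<^sup>2) * 10 * 2 ^ (3 * k) * real k * log 2 (real n))
    \<le> real (spanned_edges n k k S)" .
qed

end
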